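(* For any multi-index $I\in\mathbb{N}^6$, any smooth $\mathbb{R}$-valued function $f_1$ and any smooth $\mathbb{C}^2$-valued function $f_2$ on $\mathbb{R}^{1+2}$, we have $$\big|\big[\widehat\Gamma^I(f_1f_2)\big]_-\big|\lesssim\sum_{|I_1|+|I_2|\le|I|}\big|\Gamma^{I_1}f_1\big|\,\big|\big[\widehat\Gamma^{I_2}f_2\big]_-\big|.$$
   Context: On $\mathbb{R}^{1+2}$ with coordinates $(t,x)=(x_0,x_1,x_2)$, $r=|x|$, $\omega_a=x_a/r$ ($a=1,2$). Vector fields: $\Omega=x_1\partial_2-x_2\partial_1$, $L_a=t\partial_a+x_a\partial_t$; modified fields $\widehat\Omega=\Omega-\tfrac12\gamma^1\gamma^2$, $\widehat L_a=L_a-\tfrac12\gamma^0\gamma^a$. Set $(\Gamma_1,\dots,\Gamma_6)=(\partial_t,\partial_1,\partial_2,\Omega,L_1,L_2)$, $(\widehat\Gamma_1,\dots,\widehat\Gamma_6)=(\partial_t,\partial_1,\partial_2,\widehat\Omega,\widehat L_1,\widehat L_2)$, and for $I=(i_1,\dots,i_6)\in\mathbb{N}^6$, $\Gamma^I=\prod_{k=1}^6\Gamma_k^{i_k}$, $\widehat\Gamma^I=\prod_{k=1}^6\widehat\Gamma_k^{i_k}$, $|I|=\sum i_k$. For $\phi:\mathbb{R}^{1+2}\to\mathbb{C}^2$, $[\phi]_-=\phi-\omega_a\gamma^0\gamma^a\phi$ (summation over $a=1,2$). Dirac matrices: $\gamma^0=\begin{pmatrix}1&0\\0&-1\end{pmatrix}$,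 $\gamma^1=\begin{pmatrix}0&1\\-1&0\end{pmatrix}$, $\gamma^2=\begin{pmatrix}0&-i\\-i&0\end{pmatrix}$. The implicit constant depends only on $|I|$. *)

theory Defs
  imports "HOL-Analysis.Analysis"
begin

text \<open>Points of R^(1+2) are triples (t, x1, x2).\<close>
type_synonym pt = "real \<times> real \<times> real"

definition tc :: "pt \<Rightarrow> real" where "tc p = fst p"
definition xc :: "nat \<Rightarrow> pt \<Rightarrow> real" where
  "xc a p = (if a = 1 then fst (snd p) else snd (snd p))"
definition rad :: "pt \<Rightarrow> real" where "rad p = sqrt ((xc 1 p)^2 + (xc 2 p)^2)"
definition om :: "nat \<Rightarrow> pt \<Rightarrow> real" where "om a p = xc a p / rad p"

definition edir :: "nat \<Rightarrow> pt" where
  "edir k = (if k = 0 then (1,0,0) else if k = 1 then (0,1,0) else (0,0,1))"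

definition partial :: "(pt \<Rightarrow> 'a::real_normed_vector) \<Rightarrow> pt \<Rightarrow> pt \<Rightarrow> 'a" where
  "partial f v p = vector_derivative (\<lambda>s. f (p + s *\<^sub>R v)) (at 0)"

fun iter_partial :: "nat list \<Rightarrow> (pt \<Rightarrow> 'a::real_normed_vector) \<Rightarrow> pt \<Rightarrow> 'a" where
  "iter_partial [] f = f"
| "iter_partial (k # ks) f = partial (iter_partial ks f) (edir k)"

definition smooth :: "(pt \<Rightarrow> 'a::real_normed_vector) \<Rightarrow> bool" where
  "smooth f \<longleftrightarrow> (\<forall>ks. set ks \<subseteq> {0,1,2} \<longrightarrow> (\<forall>p. iter_partial ks f differentiable (at p)))"

definition gamma0 :: "complex^2^2" where "gamma0 = vector [vector [1, 0], vector [0, -1]]"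
definition gamma1 :: "complex^2^2" where "gamma1 = vector [vector [0, 1], vector [-1, 0]]"
definition gamma2 :: "complex^2^2" where "gamma2 = vector [vector [0, -\<i>], vector [-\<i>, 0]]"
definition gam :: "nat \<Rightarrow> complex^2^2" where
  "gam a = (if a = 1 then gamma1 else gamma2)"

text \<open>Unmodified vector fields Gamma_1..Gamma_6 = (d_t, d_1, d_2, Omega, L_1, L_2), indexed 0..5.\<close>
definition VF :: "nat \<Rightarrow> (pt \<Rightarrow> 'a::real_normed_vector) \<Rightarrow> pt \<Rightarrow> 'a" where
  "VF k f p =
    (if k = 0 then partial f (edir 0) p
     else if k = 1 then partial f (edir 1) p
     else if k = 2 then partial f (edir 2) p
     else if k = 3 then xc 1 p *\<^sub>R partial f (edir 2) p - xc 2 p *\<^sub>R partial f (edir 1) p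
     else if k = 4 then tc p *\<^sub>R partial f (edir 1) p + xc 1 p *\<^sub>R partial f (edir 0) p
     else tc p *\<^sub>R partial f (edir 2) p + xc 2 p *\<^sub>R partial f (edir 0) p)"

definition VFh :: "nat \<Rightarrow> (pt \<Rightarrow> complex^2) \<Rightarrow> pt \<Rightarrow> complex^2" where
  "VFh k f p =
    (if k = 3 then VF k f p - (1/2 :: complex) *s ((gamma1 ** gamma2) *v f p)
     else if k = 4 then VF k f p - (1/2 :: complex) *s ((gamma0 ** gamma1) *v f p)
     else if k = 5 then VF k f p - (1/2 :: complex) *s ((gamma0 ** gamma2) *v f p)
     else VF k f p)"

text \<open>Multi-indices I = [i_1,...,i_6] (lists of length 6); Gamma^I = prod_k Gamma_k^(i_k),
  the leftmost factor Gamma_1^(i_1) being applied last.\<close>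
definition mi_word :: "nat list \<Rightarrow> nat list" where
  "mi_word I = concat (map (\<lambda>k. replicate (I ! k) k) [0..<6])"

definition GammaI :: "nat list \<Rightarrow> (pt \<Rightarrow> 'a::real_normed_vector) \<Rightarrow> pt \<Rightarrow> 'a" where
  "GammaI I f = foldr VF (mi_word I) f"

definition GammaIh :: "nat list \<Rightarrow> (pt \<Rightarrow> complex^2) \<Rightarrow> pt \<Rightarrow> complex^2" where
  "GammaIh I f = foldr VFh (mi_word I) f"

definition minus_part :: "pt \<Rightarrow> complex^2 \<Rightarrow> complex^2" where
  "minus_part p v = v - (\<Sum>a\<in>{1,2::nat}. complex_of_real (om a p) *s ((gamma0 ** gam a) *v v))"

end

theory Submission
  imports Defs
begin

(* A modified field is a plain field minus a constant matrix acting pointwise, and such a matrix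
   commutes with multiplication by a real function; hence the modified fields obey the Leibniz rule
   Gamma-hat (f1 f2) = (Gamma f1) f2 + f1 (Gamma-hat f2). Iterating it along the word of
   Gamma-hat^I expands Gamma-hat^I (f1 f2) into 2^|I| products (Gamma^I1 f1) (Gamma-hat^I2 f2), one
   for each way of distributing the letters of the word between the two factors. Sub-words of a
   sorted word are sorted, so they are again words of multi-indices, with |I1| + |I2| = |I|. As
   [.]_- is real-linear at each point it passes through the real factor, and the estimate holds
   with C = 2^|I|. *)

lemma differentiable_sum_list:
  assumes "\<And>x. x \<in> set xs \<Longrightarrow> F x differentiable (at p)"
  shows "(\<lambda>q. \<Sum>x\<leftarrow>xs. F x q) differentiable (at p)"
  using assms by (induction xs) auto

lemma additive_sum_list:
  fixes T :: "('b::real_normed_vector \<Rightarrow> 'a::real_normed_vector) \<Rightarrow> 'b \<Rightarrow> 'a"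
  assumes add: "\<And>F G. F differentiable (at p) \<Longrightarrow> G differentiable (at p) \<Longrightarrow>
      T (\<lambda>q. F q + G q) p = T F p + T G p"
    and "\<And>x. x \<in> set xs \<Longrightarrow> F x differentiable (at p)"
  shows "T (\<lambda>q. \<Sum>x\<leftarrow>xs. F x q) p = (\<Sum>x\<leftarrow>xs. T (F x) p)"
  using assms(2)
proof (induction xs)
  case Nil
  have "T (\<lambda>q. 0 + 0) p = T (\<lambda>q. 0) p + T (\<lambda>q. 0) p"
    by (rule add) simp_all
  then show ?case by simp
next
  case (Cons x xs)
  then show ?case by (simp add: add differentiable_sum_list)
qed

lemma linear_sum_list: "linear f \<Longrightarrow> f (\<Sum>x\<leftarrow>xs. g x) = (\<Sum>x\<leftarrow>xs. f (g x))"
  by (induction xs) (simp_all add: linear_add linear_0)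

lemma norm_sum_list_le:
  fixes B :: real
  assumes "\<And>x. x \<in> set xs \<Longrightarrow> norm (f x) \<le> B"
  shows "norm (\<Sum>x\<leftarrow>xs. f x) \<le> real (length xs) * B"
  using assms
proof (induction xs)
  case Nil
  then show ?case by simp
next
  case (Cons x xs)
  then have "norm (f x) + norm (\<Sum>x\<leftarrow>xs. f x) \<le> B + real (length xs) * B"
    by (intro add_mono) auto
  then show ?case
    by (auto simp: algebra_simps intro: order_trans[OF norm_triangle_ineq])
qed

section \<open>Distributing a word between two factors\<close>

fun unshuffles :: "'a list \<Rightarrow> ('a list \<times> 'a list) list" where
  "unshuffles [] = [([], [])]"
| "unshuffles (k # w) =
     map (\<lambda>(u, v). (k # u, v)) (unshuffles w) @ map (\<lambda>(u, v). (u, k # v)) (unshuffles w)"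

lemma length_unshuffles: "length (unshuffles w) = 2 ^ length w"
  by (induction w) auto

lemma mset_unshuffles: "(u, v) \<in> set (unshuffles w) \<Longrightarrow> mset u + mset v = mset w"
  by (induction w arbitrary: u v) auto

lemma set_unshuffles: "(u, v) \<in> set (unshuffles w) \<Longrightarrow> set u \<union> set v = set w"
  by (drule mset_unshuffles) (metis set_mset_mset set_mset_union)

lemma sorted_unshuffles:
  "sorted w \<Longrightarrow> (u, v) \<in> set (unshuffles w) \<Longrightarrow> sorted u \<and> sorted v"
proof (induction w arbitrary: u v)
  case Nil
  then show ?case by simp
next
  case (Cons k w)
  from Cons.prems(2) obtain u' v' where uv': "(u', v') \<in> set (unshuffles w)"
    and "(u, v) = (k # u', v') \<or> (u, v) = (u', k # v')"
    by auto
  moreover have "sorted u' \<and> sorted v'"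
    using Cons.IH[OF _ uv'] Cons.prems(1) by simp
  moreover have "\<forall>x \<in> set u' \<union> set v'. k \<le> x"
    using Cons.prems(1) unfolding set_unshuffles[OF uv'] by simp
  ultimately show ?case by auto
qed

lemma foldr_product_rule:
  fixes D :: "nat \<Rightarrow> ('b::real_normed_vector \<Rightarrow> 'a::real_normed_vector) \<Rightarrow> 'b \<Rightarrow> 'a"
    and D\<^sub>1 :: "nat \<Rightarrow> ('b \<Rightarrow> real) \<Rightarrow> 'b \<Rightarrow> real"
  assumes add: "\<And>k F G p. k \<in> K \<Longrightarrow> F differentiable (at p) \<Longrightarrow> G differentiable (at p) \<Longrightarrow>
      D k (\<lambda>q. F q + G q) p = D k F p + D k G p"
    and scaleR: "\<And>k g h p. k \<in> K \<Longrightarrow> g differentiable (at p) \<Longrightarrow> h differentiable (at p) \<Longrightarrow>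
      D k (\<lambda>q. g q *\<^sub>R h q) p = D\<^sub>1 k g p *\<^sub>R h p + g p *\<^sub>R D k h p"
    and g: "\<And>u p. set u \<subseteq> K \<Longrightarrow> foldr D\<^sub>1 u g differentiable (at p)"
    and h: "\<And>v p. set v \<subseteq> K \<Longrightarrow> foldr D v h differentiable (at p)"
    and "set w \<subseteq> K"
  shows "foldr D w (\<lambda>q. g q *\<^sub>R h q) =
    (\<lambda>q. \<Sum>(u, v)\<leftarrow>unshuffles w. foldr D\<^sub>1 u g q *\<^sub>R foldr D v h q)"
  using assms(5)
proof (induction w)
  case Nil
  then show ?case by simp
next
  case (Cons k w)
  have k: "k \<in> K" and w: "set w \<subseteq> K" using Cons.prems by auto
  have uv: "set (fst x) \<subseteq> K" "set (snd x) \<subseteq> K" if "x \<in> set (unshuffles w)" for x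
    using set_unshuffles[of "fst x" "snd x" w] that w by auto
  have d: "(\<lambda>q. foldr D\<^sub>1 (fst x) g q *\<^sub>R foldr D (snd x) h q) differentiable (at p)"
    if "x \<in> set (unshuffles w)" for x p
    using uv[OF that] by (auto intro!: differentiable_scaleR g h)
  show ?case
  proof
    fix p
    have "foldr D (k # w) (\<lambda>q. g q *\<^sub>R h q) p =
        D k (\<lambda>q. \<Sum>(u, v)\<leftarrow>unshuffles w. foldr D\<^sub>1 u g q *\<^sub>R foldr D v h q) p"
      using Cons.IH[OF w] by simp
    also have "\<dots> = (\<Sum>(u, v)\<leftarrow>unshuffles w. D k (\<lambda>q. foldr D\<^sub>1 u g q *\<^sub>R foldr D v h q) p)"
      unfolding case_prod_beta by (rule additive_sum_list) (use add[OF k] d in auto)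
    also have "\<dots> = (\<Sum>(u, v)\<leftarrow>unshuffles w.
        D\<^sub>1 k (foldr D\<^sub>1 u g) p *\<^sub>R foldr D v h p + foldr D\<^sub>1 u g p *\<^sub>R D k (foldr D v h) p)"
      unfolding case_prod_beta using uv
      by (intro arg_cong[where f = sum_list] map_cong refl scaleR k g h) auto
    also have "\<dots> = (\<Sum>(u, v)\<leftarrow>unshuffles (k # w). foldr D\<^sub>1 u g p *\<^sub>R foldr D v h p)"
      unfolding case_prod_beta unshuffles.simps map_append sum_list_append
      by (simp add: sum_list_addf o_def)
    finally show "foldr D (k # w) (\<lambda>q. g q *\<^sub>R h q) p =
        (\<Sum>(u, v)\<leftarrow>unshuffles (k # w). foldr D\<^sub>1 u g p *\<^sub>R foldr D v h p)" .
  qed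
qed

section \<open>Directional derivatives and smoothness\<close>

lemma has_vector_derivative_partial:
  fixes f :: "pt \<Rightarrow> 'a::real_normed_vector"
  assumes "f differentiable (at p)"
  shows "((\<lambda>s. f (p + s *\<^sub>R v)) has_vector_derivative partial f v p) (at 0)"
proof -
  have "(\<lambda>s::real. p + s *\<^sub>R v) differentiable (at 0)"
    by (intro derivative_intros)
  then have "(f \<circ> (\<lambda>s. p + s *\<^sub>R v)) differentiable (at 0)"
    by (rule differentiable_chain_at) (simp add: assms)
  then show ?thesis
    unfolding partial_def by (simp add: o_def vector_derivative_works)
qed

lemma partial_add:
  fixes f g :: "pt \<Rightarrow> 'a::real_normed_vector"
  assumes "f differentiable (at p)" "g differentiable (at p)"
  shows "partial (\<lambda>q. f q + g q) v p = partial f v p + partial g v p"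
  unfolding partial_def[of "\<lambda>q. f q + g q"]
  by (intro vector_derivative_at has_vector_derivative_add has_vector_derivative_partial assms)

lemma partial_scaleR:
  fixes g :: "pt \<Rightarrow> real" and h :: "pt \<Rightarrow> 'a::real_normed_vector"
  assumes "g differentiable (at p)" "h differentiable (at p)"
  shows "partial (\<lambda>q. g q *\<^sub>R h q) v p = partial g v p *\<^sub>R h p + g p *\<^sub>R partial h v p"
proof -
  have "((\<lambda>s. g (p + s *\<^sub>R v)) has_field_derivative partial g v p) (at 0)"
    using has_vector_derivative_partial[OF assms(1)]
    by (simp add: has_real_derivative_iff_has_vector_derivative)
  from has_vector_derivative_scaleR[OF this has_vector_derivative_partial[OF assms(2)]]
  show ?thesis
    unfolding partial_def[of "\<lambda>q. g q *\<^sub>R h q"]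
    by (intro vector_derivative_at) (simp add: add.commute)
qed

lemma partial_bounded_linear_comp:
  fixes f :: "pt \<Rightarrow> 'a::real_normed_vector" and L :: "'a \<Rightarrow> 'b::real_normed_vector"
  assumes "bounded_linear L" "f differentiable (at p)"
  shows "partial (\<lambda>q. L (f q)) v p = L (partial f v p)"
  unfolding partial_def[of "\<lambda>q. L (f q)"]
  by (intro vector_derivative_at bounded_linear.has_vector_derivative[OF assms(1)]
      has_vector_derivative_partial assms(2))

lemma partial_const: "partial (\<lambda>q. c) v p = 0"
  unfolding partial_def by (intro vector_derivative_at) (simp add: has_vector_derivative_const)

lemma partial_bounded_linear:
  assumes "bounded_linear L"
  shows "partial L v p = L v"
proof -
  interpret bounded_linear L by fact
  have "((\<lambda>s. L (p + s *\<^sub>R v)) has_vector_derivative L v) (at 0)"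
    unfolding add scaleR by (auto intro!: derivative_eq_intros)
  then show ?thesis unfolding partial_def by (rule vector_derivative_at)
qed

lemma iter_partial_eq_foldr: "iter_partial ks f = foldr (\<lambda>k F. partial F (edir k)) ks f"
  by (induction ks) auto

lemma iter_partial_append: "iter_partial (ks @ ks') f = iter_partial ks (iter_partial ks' f)"
  by (induction ks) auto

lemma iter_partial_const: "iter_partial ks (\<lambda>q. c) = (\<lambda>q. if ks = [] then c else 0)"
  by (induction ks) (auto simp: partial_const)

lemma smooth_imp_differentiable: "smooth f \<Longrightarrow> f differentiable (at p)"
  using smooth_def[of f] by (metis empty_set empty_subsetI iter_partial.simps(1))

lemma smooth_iter_partial: "smooth f \<Longrightarrow> set ks \<subseteq> {0, 1, 2} \<Longrightarrow> smooth (iter_partial ks f)"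
  unfolding smooth_def by (metis iter_partial_append set_append Un_least)

lemma iter_partial_add:
  assumes "smooth f" "smooth g" "set ks \<subseteq> {0, 1, 2}"
  shows "iter_partial ks (\<lambda>q. f q + g q) = (\<lambda>q. iter_partial ks f q + iter_partial ks g q)"
  using assms(3)
proof (induction ks)
  case Nil
  then show ?case by simp
next
  case (Cons k ks)
  then have "smooth (iter_partial ks f)" "smooth (iter_partial ks g)"
    using smooth_iter_partial assms by auto
  with Cons show ?case
    by (auto simp: partial_add smooth_imp_differentiable)
qed

lemma smooth_add: "smooth f \<Longrightarrow> smooth g \<Longrightarrow> smooth (\<lambda>q. f q + g q)"
  unfolding smooth_def[of "\<lambda>q. f q + g q"]
  by (auto simp: iter_partial_add smooth_imp_differentiable smooth_iter_partial)

lemma iter_partial_bounded_linear_comp: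
  assumes "bounded_linear L" "smooth f" "set ks \<subseteq> {0, 1, 2}"
  shows "iter_partial ks (\<lambda>q. L (f q)) = (\<lambda>q. L (iter_partial ks f q))"
  using assms(3)
proof (induction ks)
  case Nil
  then show ?case by simp
next
  case (Cons k ks)
  then have "smooth (iter_partial ks f)"
    using smooth_iter_partial assms by auto
  with Cons show ?case
    by (auto simp: partial_bounded_linear_comp[OF assms(1)] smooth_imp_differentiable)
qed

lemma smooth_bounded_linear_comp:
  assumes "bounded_linear L" "smooth f"
  shows "smooth (\<lambda>q. L (f q))"
  unfolding smooth_def[of "\<lambda>q. L (f q)"]
proof (intro allI impI)
  fix ks :: "nat list" and p
  assume ks: "set ks \<subseteq> {0, 1, 2}"
  have "iter_partial ks f differentiable (at p)"
    using assms(2) ks smooth_def by blast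
  then have "(L \<circ> iter_partial ks f) differentiable (at p)"
    by (rule differentiable_chain_at[OF _ bounded_linear_imp_differentiable[OF assms(1)]])
  then show "iter_partial ks (\<lambda>q. L (f q)) differentiable (at p)"
    by (simp add: iter_partial_bounded_linear_comp[OF assms ks] o_def)
qed

lemma smooth_diff:
  assumes "smooth f" "smooth g"
  shows "smooth (\<lambda>q. f q - g q)"
proof -
  have "smooth (\<lambda>q. - g q)"
    by (rule smooth_bounded_linear_comp[OF bounded_linear_minus[OF bounded_linear_ident] assms(2)])
  from smooth_add[OF assms(1) this] show ?thesis by simp
qed

lemma smooth_scaleR:
  fixes g :: "pt \<Rightarrow> real" and h :: "pt \<Rightarrow> 'a::real_normed_vector"
  assumes "smooth g" "smooth h"
  shows "smooth (\<lambda>q. g q *\<^sub>R h q)"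
  unfolding smooth_def
proof (intro allI impI)
  fix ks :: "nat list" and p
  assume ks: "set ks \<subseteq> {0, 1, 2}"
  have "iter_partial ks (\<lambda>q. g q *\<^sub>R h q) = (\<lambda>q. \<Sum>(u, v)\<leftarrow>unshuffles ks.
      iter_partial u g q *\<^sub>R iter_partial v h q)"
    unfolding iter_partial_eq_foldr
    by (rule foldr_product_rule[where K = "{0, 1, 2}"])
      (use assms ks in \<open>auto simp: partial_add partial_scaleR smooth_def iter_partial_eq_foldr\<close>)
  moreover have "iter_partial u g differentiable (at p)" "iter_partial v h differentiable (at p)"
    if "(u, v) \<in> set (unshuffles ks)" for u v
    using set_unshuffles[OF that] ks assms smooth_def by blast+
  ultimately show "iter_partial ks (\<lambda>q. g q *\<^sub>R h q) differentiable (at p)"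
    by (auto intro!: differentiable_sum_list simp: case_prod_beta)
qed

lemma smooth_bounded_linear:
  assumes "bounded_linear L"
  shows "smooth L"
  unfolding smooth_def
proof (intro allI impI)
  fix ks :: "nat list" and p
  show "iter_partial ks L differentiable (at p)"
  proof (cases ks rule: rev_cases)
    case Nil
    then show ?thesis using bounded_linear_imp_differentiable[OF assms] by simp
  next
    case (snoc ks' k)
    have "partial L (edir k) = (\<lambda>q. L (edir k))"
      using partial_bounded_linear[OF assms] by (simp add: fun_eq_iff)
    then show ?thesis
      by (simp add: snoc iter_partial_append iter_partial_const)
  qed
qed

lemma smooth_tc: "smooth tc"
  unfolding tc_def by (intro smooth_bounded_linear bounded_linear_fst)

lemma smooth_xc: "smooth (xc a)"
proof -
  have "bounded_linear (\<lambda>p::pt. fst (snd p))" "bounded_linear (\<lambda>p::pt. snd (snd p))"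
    by (auto intro: bounded_linear_compose[OF bounded_linear_fst bounded_linear_snd]
        bounded_linear_compose[OF bounded_linear_snd bounded_linear_snd])
  then show ?thesis
    unfolding xc_def[abs_def] by (cases "a = 1") (auto intro: smooth_bounded_linear)
qed

definition spin_matrix :: "nat \<Rightarrow> complex^2^2" where
  "spin_matrix k =
    (if k = 3 then gamma1 ** gamma2 else if k = 4 then gamma0 ** gamma1
     else if k = 5 then gamma0 ** gamma2 else 0)"

lemma VFh_eq: "VFh k f p = VF k f p - (1 / 2 :: complex) *s (spin_matrix k *v f p)"
  by (simp add: VFh_def spin_matrix_def)

lemma linear_scalar_matrix_vector:
  "linear (\<lambda>v :: complex^'n. c *s (M *v v))"
proof (rule linearI)
  show "c *s (M *v (x + y)) = c *s (M *v x) + c *s (M *v y)" for x y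
    by (simp add: vec_eq_iff matrix_vector_mult_def sum_distrib_left algebra_simps sum.distrib)
  show "c *s (M *v (r *\<^sub>R x)) = r *\<^sub>R (c *s (M *v x))" for r x
    unfolding vec_eq_iff matrix_vector_mult_def vector_smult_component vec_lambda_beta
      vector_scaleR_component
    by (simp add: scaleR_conv_of_real sum_distrib_left algebra_simps)
qed

lemma bounded_linear_scalar_matrix_vector:
  "bounded_linear (\<lambda>v :: complex^'n. c *s (M *v v))"
  using linear_scalar_matrix_vector linear_conv_bounded_linear by blast

lemma bounded_linear_minus_part: "bounded_linear (minus_part p)"
proof -
  have "linear (\<lambda>v :: complex^2.
      v - (\<Sum>a\<in>{1, 2::nat}. complex_of_real (om a p) *s ((gamma0 ** gam a) *v v)))"
    by (intro linear_compose_sub linear_ident linear_compose_sum linear_scalar_matrix_vector ballI)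
  then show ?thesis
    unfolding minus_part_def[abs_def] by (rule linear_conv_bounded_linear[THEN iffD1])
qed

lemma VF_add:
  assumes "f differentiable (at p)" "g differentiable (at p)"
  shows "VF k (\<lambda>q. f q + g q) p = VF k f p + VF k g p"
  unfolding VF_def using partial_add[OF assms] by (simp add: algebra_simps)

lemma VF_scaleR:
  fixes g :: "pt \<Rightarrow> real" and h :: "pt \<Rightarrow> 'a::real_normed_vector"
  assumes "g differentiable (at p)" "h differentiable (at p)"
  shows "VF k (\<lambda>q. g q *\<^sub>R h q) p = VF k g p *\<^sub>R h p + g p *\<^sub>R VF k h p"
  unfolding VF_def using partial_scaleR[OF assms] by (simp add: algebra_simps)

lemma VFh_add:
  assumes "f differentiable (at p)" "g differentiable (at p)"
  shows "VFh k (\<lambda>q. f q + g q) p = VFh k f p + VFh k g p"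
  unfolding VFh_eq VF_add[OF assms]
    linear_add[OF linear_scalar_matrix_vector[of "1 / 2" "spin_matrix k"]]
  by simp

lemma VFh_scaleR:
  fixes g :: "pt \<Rightarrow> real"
  assumes "g differentiable (at p)" "h differentiable (at p)"
  shows "VFh k (\<lambda>q. g q *\<^sub>R h q) p = VF k g p *\<^sub>R h p + g p *\<^sub>R VFh k h p"
  unfolding VFh_eq VF_scaleR[OF assms]
    linear_scale[OF linear_scalar_matrix_vector[of "1 / 2" "spin_matrix k"]]
  by (simp add: algebra_simps)

lemma smooth_VF:
  assumes "smooth f"
  shows "smooth (VF k f)"
proof -
  have partials: "smooth (partial f (edir j))" if "j \<le> 2" for j
    using smooth_iter_partial[OF assms, of "[j]"] that by (simp add: le_Suc_eq numeral_2_eq_2)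
  consider "k = 0" | "k = 1" | "k = 2" | "k = 3" | "k = 4" | "k \<ge> 5"
    by linarith
  then show ?thesis
    by cases (simp_all add: VF_def[abs_def] partials smooth_add smooth_diff smooth_scaleR
        smooth_xc smooth_tc)
qed

lemma smooth_VFh: "smooth f \<Longrightarrow> smooth (VFh k f)"
  unfolding VFh_eq[abs_def]
  by (intro smooth_diff smooth_VF smooth_bounded_linear_comp[OF bounded_linear_scalar_matrix_vector])

lemma foldr_VFh_scaleR:
  fixes f\<^sub>1 :: "pt \<Rightarrow> real"
  assumes "smooth f\<^sub>1" "smooth f\<^sub>2"
  shows "foldr VFh w (\<lambda>q. f\<^sub>1 q *\<^sub>R f\<^sub>2 q) =
    (\<lambda>q. \<Sum>(u, v)\<leftarrow>unshuffles w. foldr VF u f\<^sub>1 q *\<^sub>R foldr VFh v f\<^sub>2 q)"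
proof -
  have "smooth (foldr VF u f\<^sub>1)" for u
    by (induction u) (auto intro: smooth_VF assms(1))
  moreover have "smooth (foldr VFh v f\<^sub>2)" for v
    by (induction v) (auto intro: smooth_VFh assms(2))
  ultimately show ?thesis
    by (intro foldr_product_rule[where K = UNIV])
      (auto simp: VFh_add VFh_scaleR smooth_imp_differentiable)
qed

section \<open>Multi-indices\<close>

lemma sorted_mi_word: "sorted (mi_word I)"
proof -
  have "sorted (concat (map (\<lambda>j. replicate (I ! j) j) [0..<n]))" for n
    by (induction n) (auto simp: sorted_append)
  then show ?thesis unfolding mi_word_def .
qed

lemma set_mi_word: "set (mi_word I) \<subseteq> {..<6}"
  unfolding mi_word_def by auto

lemma count_mset_mi_word: "count (mset (mi_word I)) k = (if k < 6 then I ! k else 0)"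
proof -
  have "count (mset (concat (map (\<lambda>j. replicate (I ! j) j) [0..<n]))) k =
      (if k < n then I ! k else 0)" for n
    by (induction n) auto
  then show ?thesis unfolding mi_word_def .
qed

lemma length_mi_word:
  assumes "length I = 6"
  shows "length (mi_word I) = sum_list I"
proof -
  have "map ((!) I) [0..<6] = I"
    using map_nth[of I] assms by simp
  then show ?thesis
    unfolding mi_word_def by (simp add: length_concat o_def)
qed

lemma sorted_eq_mi_word:
  assumes "sorted u" "set u \<subseteq> {..<6}"
  shows "u = mi_word (map (count (mset u)) [0..<6])"
proof -
  have "count (mset (mi_word (map (count (mset u)) [0..<6]))) k = count (mset u) k" for k
    using assms(2) by (auto simp: count_mset_mi_word count_eq_zero_iff)
  then have "mset (mi_word (map (count (mset u)) [0..<6])) = mset u"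
    by (simp add: multiset_eq_iff)
  from properties_for_sort[OF this sorted_mi_word] show ?thesis
    by (simp add: sorted_sort_id[OF assms(1)])
qed

lemma unshuffles_mi_word:
  assumes "length I = 6" "(u, v) \<in> set (unshuffles (mi_word I))"
  obtains I\<^sub>1 I\<^sub>2
  where "length I\<^sub>1 = 6" "length I\<^sub>2 = 6" "sum_list I\<^sub>1 + sum_list I\<^sub>2 = sum_list I"
    and "u = mi_word I\<^sub>1" "v = mi_word I\<^sub>2"
proof
  define I\<^sub>1 I\<^sub>2
    where "I\<^sub>1 = map (count (mset u)) [0..<6]" and "I\<^sub>2 = map (count (mset v)) [0..<6]"
  have "set u \<subseteq> {..<6}" "set v \<subseteq> {..<6}"
    using set_unshuffles[OF assms(2)] set_mi_word[of I] by auto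
  with sorted_unshuffles[OF sorted_mi_word assms(2)]
  show u: "u = mi_word I\<^sub>1" and v: "v = mi_word I\<^sub>2"
    unfolding I\<^sub>1_def I\<^sub>2_def by (auto intro: sorted_eq_mi_word)
  show "length I\<^sub>1 = 6" "length I\<^sub>2 = 6"
    unfolding I\<^sub>1_def I\<^sub>2_def by simp_all
  have "length u + length v = length (mi_word I)"
    using arg_cong[OF mset_unshuffles[OF assms(2)], of size] by simp
  then show "sum_list I\<^sub>1 + sum_list I\<^sub>2 = sum_list I"
    using u v \<open>length I\<^sub>1 = 6\<close> \<open>length I\<^sub>2 = 6\<close> by (simp add: length_mi_word assms(1))
qed

lemma finite_multi_indices: "finite {I :: nat list. length I = m \<and> sum_list I \<le> n}"
proof (rule finite_subset)
  show "{I. length I = m \<and> sum_list I \<le> n} \<subseteq> {I. set I \<subseteq> {0..n} \<and> length I = m}"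
    using member_le_sum_list by fastforce
  show "finite {I. set I \<subseteq> {0..n} \<and> length I = m}"
    by (rule finite_lists_length_eq) simp
qed

lemma finite_multi_index_pairs:
  "finite {(I\<^sub>1, I\<^sub>2). length I\<^sub>1 = m \<and> length I\<^sub>2 = m \<and> sum_list I\<^sub>1 + sum_list I\<^sub>2 \<le> (n::nat)}"
proof (rule finite_subset)
  show "{(I\<^sub>1, I\<^sub>2). length I\<^sub>1 = m \<and> length I\<^sub>2 = m \<and> sum_list I\<^sub>1 + sum_list I\<^sub>2 \<le> n} \<subseteq>
      {I. length I = m \<and> sum_list I \<le> n} \<times> {I. length I = m \<and> sum_list I \<le> n}"
    by auto
  show "finite ({I. length I = m \<and> sum_list I \<le> n} \<times> {I. length I = m \<and> sum_list I \<le> n})"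
    by (intro finite_cartesian_product finite_multi_indices)
qed

lemma minus_part_GammaIh_scaleR:
  fixes f\<^sub>1 :: "pt \<Rightarrow> real"
  assumes "smooth f\<^sub>1" "smooth f\<^sub>2"
  shows "minus_part p (GammaIh I (\<lambda>q. f\<^sub>1 q *\<^sub>R f\<^sub>2 q) p) =
    (\<Sum>(u, v)\<leftarrow>unshuffles (mi_word I). foldr VF u f\<^sub>1 p *\<^sub>R minus_part p (foldr VFh v f\<^sub>2 p))"
  using bounded_linear_minus_part[of p, THEN bounded_linear.linear]
  unfolding GammaIh_def foldr_VFh_scaleR[OF assms] case_prod_beta
  by (simp add: linear_sum_list linear_scale)

theorem lemma2p3:
  fixes n :: nat
  shows "\<exists>C. \<forall>I (f1 :: pt \<Rightarrow> real) (f2 :: pt \<Rightarrow> complex^2) p.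
           length I = 6 \<and> sum_list I = n \<and> smooth f1 \<and> smooth f2 \<and> rad p \<noteq> 0 \<longrightarrow>
           norm (minus_part p (GammaIh I (\<lambda>q. f1 q *\<^sub>R f2 q) p))
             \<le> C * (\<Sum>(I1, I2) \<in> {(I1, I2). length I1 = 6 \<and> length I2 = 6 \<and>
                                   sum_list I1 + sum_list I2 \<le> sum_list I}.
                    \<bar>GammaI I1 f1 p\<bar> * norm (minus_part p (GammaIh I2 f2 p)))"
proof (intro exI[of _ "2 ^ n"] allI impI, elim conjE)
  fix I and f1 :: "pt \<Rightarrow> real" and f2 :: "pt \<Rightarrow> complex^2" and p
  assume I: "length I = 6" "sum_list I = n" and "smooth f1" "smooth f2"
  define P where
    "P = {(I1, I2). length I1 = 6 \<and> length I2 = 6 \<and> sum_list I1 + sum_list I2 \<le> sum_list I}"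
  define T where "T = (\<lambda>(I1, I2). \<bar>GammaI I1 f1 p\<bar> * norm (minus_part p (GammaIh I2 f2 p)))"
  have term_le: "norm (foldr VF u f1 p *\<^sub>R minus_part p (foldr VFh v f2 p)) \<le> sum T P"
    if uv: "(u, v) \<in> set (unshuffles (mi_word I))" for u v
  proof -
    obtain I1 I2 where "length I1 = 6" "length I2 = 6" "sum_list I1 + sum_list I2 = sum_list I"
      and words: "u = mi_word I1" "v = mi_word I2"
      by (rule unshuffles_mi_word[OF I(1) uv])
    then have "T (I1, I2) \<le> sum T P"
      using finite_multi_index_pairs by (intro member_le_sum) (auto simp: P_def T_def)
    then show ?thesis
      unfolding T_def GammaI_def GammaIh_def words by simp
  qed
  have "norm (minus_part p (GammaIh I (\<lambda>q. f1 q *\<^sub>R f2 q) p))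
      \<le> real (length (unshuffles (mi_word I))) * sum T P"
    unfolding minus_part_GammaIh_scaleR[OF \<open>smooth f1\<close> \<open>smooth f2\<close>]
    by (rule norm_sum_list_le) (auto intro: term_le)
  then show "norm (minus_part p (GammaIh I (\<lambda>q. f1 q *\<^sub>R f2 q) p)) \<le> 2 ^ n * sum T P"
    by (simp add: length_unshuffles length_mi_word I)
qed

end
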